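(* Let $N$ be a binary orchard network and let $N'$ be the directed graph obtained from $N$ by an rSPR move. If $N'$ admits an HGT-consistent labelling (in the sense for directed graphs given below), then $N'$ is a network; that is, the rSPR move is valid.
   Context: A (directed phylogenetic) network on a finite taxa set $X$ is a directed acyclic graph without parallel arcs whose nodes are of the following types: a unique root (indegree 0, outdegree 1); tree nodes (indegree 1, outdegree at least 2); reticulations (indegree at least 2, outdegree 1); leaves (indegree 1, outdegree 0), the leaves being bijectively labelled by $X$. A network is binary if every tree node and every reticulation has total degree exactly 3. A tree is a network without reticulations. Orchard networks: An ordered pair of leaves $(x,y)$ is a cherry if $x$ and $y$ have a common parent; it is a reticulated cherry if the parent $p_x$ of $x$ is a reticulation and $p_x$ and $y$ have a common parent. Let $p_x,p_y$ be the parents of $x,y$. Reducing $(x,y)$ in a network $N$: if $(x,y)$ is a cherry, delete $x$ and suppress $p_x$ if it now has indegree 1 and outdegree 1; if $(x,y)$ is a reticulated cherry, delete the arc $(p_y,p_x)$ and suppress any resulting node of indegree 1 and outdegree 1; otherwise do nothing. (Suppressing a node $v$ with one parent $u$ and one child $w$ means deleting $v$ and adding the arc $(u,w)$.) $N$ is orchard if some sequence of such reductions turns $N$ into a tree with exactly one leaf. rSPR move: Let $N$ be a binary network with an arc $(z,w)$ and an arc $e$ with endpoints $x$ and $y$ (either $e=(x,y)$ or $e=(y,x)$), and let $p$ and $c$ be, respectively, the parent and the child of $x$ other than $y$. The rSPR move $(p,x,c)\xrightarrow{e}(z,w)$ replaces the arcs $(p,x)$, $(x,c)$, $(z,w)$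 by the arcs $(p,c)$, $(z,x)$, $(x,w)$. The move is valid if the resulting directed graph is a network. HGT-consistent labelling of a directed graph: Let $D=(V,A)$ be a directed graph, possibly with parallel arcs, in which every node has indegree and outdegree at most 2 and total degree at most 3. An HGT-consistent labelling of $D$ is a map $t:V\to\mathbb{R}$ such that (1) for every arc $(u,v)$, $t(u)\le t(v)$, and equality is allowed only if $v$ has indegree 2; (2) every node $u$ with at least one child has a child $v$ with $t(u)<t(v)$; (3) for every node $r$ with two parents $u$ and $v$, exactly one of $t(u)=t(r)$ and $t(v)=t(r)$ holds. *)

theory Defs
  imports Complex_Main "HOL-Library.Multiset"
begin

definition s_indeg :: "('v \<times> 'v) set \<Rightarrow> 'v \<Rightarrow> nat" where
  "s_indeg A v = card {u. (u, v) \<in> A}"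

definition s_outdeg :: "('v \<times> 'v) set \<Rightarrow> 'v \<Rightarrow> nat" where
  "s_outdeg A v = card {w. (v, w) \<in> A}"

definition is_root_node :: "('v \<times> 'v) set \<Rightarrow> 'v \<Rightarrow> bool" where
  "is_root_node A v \<longleftrightarrow> s_indeg A v = 0 \<and> s_outdeg A v = 1"

definition is_tree_node :: "('v \<times> 'v) set \<Rightarrow> 'v \<Rightarrow> bool" where
  "is_tree_node A v \<longleftrightarrow> s_indeg A v = 1 \<and> s_outdeg A v \<ge> 2"

definition is_reticulation :: "('v \<times> 'v) set \<Rightarrow> 'v \<Rightarrow> bool" where
  "is_reticulation A v \<longleftrightarrow> s_indeg A v \<ge> 2 \<and> s_outdeg A v = 1"

definition is_leaf :: "('v \<times> 'v) set \<Rightarrow> 'v \<Rightarrow> bool" where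
  "is_leaf A v \<longleftrightarrow> s_indeg A v = 1 \<and> s_outdeg A v = 0"

text \<open>The leaves are
  identified with their labels, i.e. the leaf set is exactly X (bijective labelling).
  Arcs form a set, so there are no parallel arcs.\<close>
definition network :: "'v set \<Rightarrow> 'v set \<Rightarrow> ('v \<times> 'v) set \<Rightarrow> bool" where
  "network X V A \<longleftrightarrow>
     finite V \<and> A \<subseteq> V \<times> V \<and> acyclic A \<and>
     (\<forall>v\<in>V. is_root_node A v \<or> is_tree_node A v \<or> is_reticulation A v \<or> is_leaf A v) \<and>
     (\<exists>!r. r \<in> V \<and> is_root_node A r) \<and>
     {v\<in>V. is_leaf A v} = X"

definition binary_network :: "'v set \<Rightarrow> 'v set \<Rightarrow> ('v \<times> 'v) set \<Rightarrow> bool" where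
  "binary_network X V A \<longleftrightarrow> network X V A \<and>
     (\<forall>v\<in>V. (is_tree_node A v \<longrightarrow> s_outdeg A v = 2) \<and>
             (is_reticulation A v \<longrightarrow> s_indeg A v = 2))"

definition tree_network :: "'v set \<Rightarrow> 'v set \<Rightarrow> ('v \<times> 'v) set \<Rightarrow> bool" where
  "tree_network X V A \<longleftrightarrow> network X V A \<and> (\<forall>v\<in>V. \<not> is_reticulation A v)"

definition the_parent :: "('v \<times> 'v) set \<Rightarrow> 'v \<Rightarrow> 'v" where
  "the_parent A v = (THE u. (u, v) \<in> A)"

definition the_child :: "('v \<times> 'v) set \<Rightarrow> 'v \<Rightarrow> 'v" where
  "the_child A v = (THE w. (v, w) \<in> A)"

definition suppress :: "'v \<Rightarrow> 'v set \<times> ('v \<times> 'v) set \<Rightarrow> 'v set \<times> ('v \<times> 'v) set" where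
  "suppress v G = (let (V, A) = G in
     if v \<in> V \<and> s_indeg A v = 1 \<and> s_outdeg A v = 1 then
       (let u = the_parent A v; w = the_child A v in
         (V - {v}, (A - {(u, v), (v, w)}) \<union> {(u, w)}))
     else G)"

definition is_cherry :: "('v \<times> 'v) set \<Rightarrow> 'v \<Rightarrow> 'v \<Rightarrow> bool" where
  "is_cherry A x y \<longleftrightarrow> the_parent A x = the_parent A y"

definition is_reticulated_cherry :: "('v \<times> 'v) set \<Rightarrow> 'v \<Rightarrow> 'v \<Rightarrow> bool" where
  "is_reticulated_cherry A x y \<longleftrightarrow>
     is_reticulation A (the_parent A x) \<and> (the_parent A y, the_parent A x) \<in> A"

definition reduce_pair :: "'v \<Rightarrow> 'v \<Rightarrow> 'v set \<times> ('v \<times> 'v) set \<Rightarrow> 'v set \<times> ('v \<times> 'v) set" where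
  "reduce_pair x y G = (let (V, A) = G; px = the_parent A x; py = the_parent A y in
     if is_cherry A x y then suppress px (V - {x}, A - {(px, x)})
     else if is_reticulated_cherry A x y then
       suppress py (suppress px (V, A - {(py, px)}))
     else G)"

definition reduction_step :: "'v set \<times> ('v \<times> 'v) set \<Rightarrow> 'v set \<times> ('v \<times> 'v) set \<Rightarrow> bool" where
  "reduction_step G G' \<longleftrightarrow> (\<exists>x y. x \<noteq> y \<and> x \<in> fst G \<and> y \<in> fst G \<and>
      is_leaf (snd G) x \<and> is_leaf (snd G) y \<and> G' = reduce_pair x y G)"

definition orchard :: "'v set \<Rightarrow> 'v set \<Rightarrow> ('v \<times> 'v) set \<Rightarrow> bool" where
  "orchard X V A \<longleftrightarrow> network X V A \<and>
     (\<exists>V' A' l. reduction_step\<^sup>*\<^sup>* (V, A) (V', A') \<and> tree_network {l} V' A')"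

text \<open>The rSPR move (p,x,c) --e--> (z,w) applied to a network with arc set A,
  yielding the arc multiset of the resulting directed graph (parallel arcs possible).\<close>
definition rspr_arcs :: "('v \<times> 'v) set \<Rightarrow> 'v \<Rightarrow> 'v \<Rightarrow> 'v \<Rightarrow> 'v \<Rightarrow> 'v \<Rightarrow> ('v \<times> 'v) multiset" where
  "rspr_arcs A p x c z w =
     mset_set A - {#(p, x), (x, c), (z, w)#} + {#(p, c), (z, x), (x, w)#}"

definition m_indeg :: "('v \<times> 'v) multiset \<Rightarrow> 'v \<Rightarrow> nat" where
  "m_indeg M v = size (filter_mset (\<lambda>a. snd a = v) M)"

definition m_outdeg :: "('v \<times> 'v) multiset \<Rightarrow> 'v \<Rightarrow> nat" where
  "m_outdeg M v = size (filter_mset (\<lambda>a. fst a = v) M)"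

definition hgt_graph :: "'v set \<Rightarrow> ('v \<times> 'v) multiset \<Rightarrow> bool" where
  "hgt_graph V M \<longleftrightarrow> set_mset M \<subseteq> V \<times> V \<and>
     (\<forall>v\<in>V. m_indeg M v \<le> 2 \<and> m_outdeg M v \<le> 2 \<and> m_indeg M v + m_outdeg M v \<le> 3)"

definition hgt_consistent :: "'v set \<Rightarrow> ('v \<times> 'v) multiset \<Rightarrow> ('v \<Rightarrow> real) \<Rightarrow> bool" where
  "hgt_consistent V M t \<longleftrightarrow>
     (\<forall>u v. (u, v) \<in># M \<longrightarrow> t u \<le> t v \<and> (t u = t v \<longrightarrow> m_indeg M v = 2)) \<and>
     (\<forall>u\<in>V. m_outdeg M u \<ge> 1 \<longrightarrow> (\<exists>v. (u, v) \<in># M \<and> t u < t v)) \<and>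
     (\<forall>r\<in>V. \<forall>u v. filter_mset (\<lambda>a. snd a = r) M = {#(u, r), (v, r)#} \<longrightarrow>
        ((t u = t r) \<noteq> (t v = t r)))"

definition admits_hgt_labelling :: "'v set \<Rightarrow> ('v \<times> 'v) multiset \<Rightarrow> bool" where
  "admits_hgt_labelling V M \<longleftrightarrow> hgt_graph V M \<and> (\<exists>t. hgt_consistent V M t)"

definition multigraph_network :: "'v set \<Rightarrow> 'v set \<Rightarrow> ('v \<times> 'v) multiset \<Rightarrow> bool" where
  "multigraph_network X V M \<longleftrightarrow> (\<forall>a. count M a \<le> 1) \<and> network X V (set_mset M)"

end

theory Submission
  imports Defs
begin

text \<open>An rSPR move removes the arcs (p,x), (x,c), (z,w) and adds (p,c), (z,x), (x,w), so every
  node keeps its in- and outdegree; the resulting graph can therefore fail to be a network only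
  by containing a parallel arc or a directed cycle. An HGT-consistent labelling excludes both.
  Two parallel arcs into r would make r a node with two parents u, u for which condition (3)
  is contradictory. Along a directed cycle the labels are weakly increasing, hence constant; a
  node a of the cycle then has an incoming arc with equal labels, so it is a reticulation with
  outdegree at most 1, yet it has both the cycle arc leaving it (equal labels) and, by
  condition (2), an arc to a strictly larger label.\<close>

lemma m_indeg_eq_count: "m_indeg M v = count (image_mset snd M) v"
  unfolding m_indeg_def by (induction M) auto

lemma m_outdeg_eq_count: "m_outdeg M v = count (image_mset fst M) v"
  unfolding m_outdeg_def by (induction M) auto

lemma s_indeg_eq_m_indeg_mset_set:
  assumes "finite B"
  shows "s_indeg B v = m_indeg (mset_set B) v"
proof -
  have "m_indeg (mset_set B) v = card {a \<in> B. snd a = v}"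
    unfolding m_indeg_def using assms by simp
  also have "{a \<in> B. snd a = v} = (\<lambda>u. (u, v)) ` {u. (u, v) \<in> B}" by force
  also have "card \<dots> = s_indeg B v"
    unfolding s_indeg_def by (rule card_image) (auto simp: inj_on_def)
  finally show ?thesis by simp
qed

lemma s_outdeg_eq_m_outdeg_mset_set:
  assumes "finite B"
  shows "s_outdeg B v = m_outdeg (mset_set B) v"
proof -
  have "m_outdeg (mset_set B) v = card {a \<in> B. fst a = v}"
    unfolding m_outdeg_def using assms by simp
  also have "{a \<in> B. fst a = v} = (\<lambda>w. (v, w)) ` {w. (v, w) \<in> B}" by force
  also have "card \<dots> = s_outdeg B v"
    unfolding s_outdeg_def by (rule card_image) (auto simp: inj_on_def)
  finally show ?thesis by simp
qed

lemma mset_set_set_mset_if_count_le_1: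
  assumes "\<forall>a. count M a \<le> 1"
  shows "mset_set (set_mset M) = M"
proof (rule multiset_eqI)
  fix a
  show "count (mset_set (set_mset M)) a = count M a"
  proof (cases "a \<in># M")
    case True
    then have "0 < count M a" by simp
    with True assms show ?thesis by (simp add: le_antisym Suc_leI)
  qed (simp add: not_in_iff)
qed

lemma s_indeg_set_mset_if_count_le_1:
  assumes "\<forall>a. count M a \<le> 1"
  shows "s_indeg (set_mset M) v = m_indeg M v"
  using s_indeg_eq_m_indeg_mset_set[of "set_mset M" v]
  unfolding mset_set_set_mset_if_count_le_1[OF assms] by simp

lemma s_outdeg_set_mset_if_count_le_1:
  assumes "\<forall>a. count M a \<le> 1"
  shows "s_outdeg (set_mset M) v = m_outdeg M v"
  using s_outdeg_eq_m_outdeg_mset_set[of "set_mset M" v]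
  unfolding mset_set_set_mset_if_count_le_1[OF assms] by simp

lemma m_outdeg_ge_2:
  assumes "(a, v) \<in># M" "(a, v') \<in># M" "v \<noteq> v'"
  shows "2 \<le> m_outdeg M a"
proof -
  have "{#(a, v), (a, v')#} \<subseteq># filter_mset (\<lambda>b. fst b = a) M"
    using assms by (auto simp: insert_subset_eq_iff in_diff_count)
  then show ?thesis
    unfolding m_outdeg_def using size_mset_mono by fastforce
qed

lemma image_mset_diff_add_cancel:
  assumes "R \<subseteq># M" "image_mset f R = image_mset f S"
  shows "image_mset f (M - R + S) = image_mset f M"
proof -
  have "image_mset f (M - R + S) = image_mset f M - image_mset f R + image_mset f S"
    by (simp only: image_mset_union image_mset_Diff[OF assms(1)])
  also have "\<dots> = image_mset f M"
    using image_mset_subseteq_mono[OF assms(1), of f] unfolding assms(2)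
    by (rule subset_mset.diff_add)
  finally show ?thesis .
qed

lemma rspr_arcs_degrees:
  assumes "finite A" "(p, x) \<in> A" "(x, c) \<in> A" "(z, w) \<in> A" "p \<noteq> x"
    and "(z, w) \<noteq> (p, x)" "(z, w) \<noteq> (x, c)"
  shows "m_indeg (rspr_arcs A p x c z w) v = m_indeg (mset_set A) v"
    and "m_outdeg (rspr_arcs A p x c z w) v = m_outdeg (mset_set A) v"
proof -
  let ?R = "{#(p, x), (x, c), (z, w)#}" and ?S = "{#(p, c), (z, x), (x, w)#}"
  have "?R = mset_set {(p, x), (x, c), (z, w)}"
    using assms(5-7) by auto
  then have R_sub: "?R \<subseteq># mset_set A"
    using assms(1-4) by simp
  show "m_indeg (rspr_arcs A p x c z w) v = m_indeg (mset_set A) v"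
    unfolding m_indeg_eq_count rspr_arcs_def
    using image_mset_diff_add_cancel[OF R_sub, of snd ?S] by simp
  show "m_outdeg (rspr_arcs A p x c z w) v = m_outdeg (mset_set A) v"
    unfolding m_outdeg_eq_count rspr_arcs_def
    using image_mset_diff_add_cancel[OF R_sub, of fst ?S] by simp
qed

lemma hgt_consistent_count_le_1:
  assumes "hgt_graph V M" "hgt_consistent V M t"
  shows "count M a \<le> 1"
proof (rule ccontr)
  obtain u r where a: "a = (u, r)" by fastforce
  define F where "F = filter_mset (\<lambda>b. snd b = r) M"
  assume "\<not> count M a \<le> 1"
  then have two: "{#(u, r), (u, r)#} \<subseteq># F"
    unfolding F_def a by (simp add: subseteq_mset_def)
  then have "r \<in> V"
    using assms(1) unfolding F_def hgt_graph_def by (auto dest!: mset_subset_eqD)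
  then have "size F \<le> 2"
    using assms(1) unfolding hgt_graph_def m_indeg_def F_def by auto
  with two have "F = {#(u, r), (u, r)#}"
    using mset_subset_size[of "{#(u, r), (u, r)#}" F] subset_mset.order_iff_strict by fastforce
  with \<open>r \<in> V\<close> assms(2) show False
    unfolding hgt_consistent_def F_def by blast
qed

lemma hgt_consistent_mono_rtrancl:
  assumes "hgt_consistent V M t" "(u, v) \<in> (set_mset M)\<^sup>*"
  shows "t u \<le> t v"
  using assms(2)
proof (induction rule: rtrancl_induct)
  case (step b d)
  then show ?case using assms(1) unfolding hgt_consistent_def by force
qed simp

lemma hgt_consistent_acyclic:
  assumes graph: "hgt_graph V M" and cons: "hgt_consistent V M t"
  shows "acyclic (set_mset M)"
proof (rule acyclicI, intro allI notI)
  fix a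
  assume cycle: "(a, a) \<in> (set_mset M)\<^sup>+"
  obtain u where "(a, u) \<in> (set_mset M)\<^sup>*" and in_arc: "(u, a) \<in># M"
    using tranclD2[OF cycle] by blast
  obtain v where out_arc: "(a, v) \<in># M" and "(v, a) \<in> (set_mset M)\<^sup>*"
    using tranclD[OF cycle] by blast
  have arc_mono: "t b \<le> t d" if "(b, d) \<in># M" for b d
    using that cons unfolding hgt_consistent_def by blast
  have "t u = t a" "t a = t v"
    using arc_mono[OF in_arc] arc_mono[OF out_arc] \<open>(a, u) \<in> _\<close> \<open>(v, a) \<in> _\<close>
      hgt_consistent_mono_rtrancl[OF cons] by (auto intro: antisym)
  have "a \<in> V"
    using graph in_arc unfolding hgt_graph_def by auto
  have "m_indeg M a = 2"
    using \<open>t u = t a\<close> in_arc cons unfolding hgt_consistent_def by blast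
  with graph \<open>a \<in> V\<close> have "m_outdeg M a \<le> 1"
    unfolding hgt_graph_def by force
  have "1 \<le> m_outdeg M a"
    using out_arc unfolding m_outdeg_eq_count by (simp add: Suc_le_eq) (metis fst_conv image_eqI)
  then obtain v' where "(a, v') \<in># M" "t a < t v'"
    using cons \<open>a \<in> V\<close> unfolding hgt_consistent_def by blast
  with \<open>t a = t v\<close> out_arc have "2 \<le> m_outdeg M a"
    by (intro m_outdeg_ge_2[of a v M v']) auto
  with \<open>m_outdeg M a \<le> 1\<close> show False by simp
qed

lemma network_if_same_degrees:
  assumes "network X V A" "B \<subseteq> V \<times> V" "acyclic B"
    and "\<And>v. s_indeg B v = s_indeg A v" "\<And>v. s_outdeg B v = s_outdeg A v"
  shows "network X V B"
  using assms unfolding network_def is_root_node_def is_tree_node_def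
    is_reticulation_def is_leaf_def by simp

theorem mainTheorem8:
  fixes X V :: "'v set" and A :: "('v \<times> 'v) set" and x y p c z w :: 'v
  assumes "binary_network X V A"
    and "orchard X V A"
    and "(z, w) \<in> A"
    and "(x, y) \<in> A \<or> (y, x) \<in> A"
    and "(p, x) \<in> A" and "p \<noteq> y"
    and "(x, c) \<in> A" and "c \<noteq> y"
    and "(z, w) \<noteq> (p, x)" and "(z, w) \<noteq> (x, c)"
    and "admits_hgt_labelling V (rspr_arcs A p x c z w)"
  shows "multigraph_network X V (rspr_arcs A p x c z w)"
proof -
  define M where "M = rspr_arcs A p x c z w"
  have net: "network X V A"
    using assms(1) unfolding binary_network_def by blast
  then have "finite A" "acyclic A"
    unfolding network_def by (auto dest: finite_subset[OF _ finite_cartesian_product])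
  then have "p \<noteq> x"
    using assms(5) by (auto simp: acyclic_def)
  obtain t where graph: "hgt_graph V M" and cons: "hgt_consistent V M t"
    using assms(11) unfolding admits_hgt_labelling_def M_def by blast
  have simple: "\<forall>a. count M a \<le> 1"
    using hgt_consistent_count_le_1[OF graph cons] by blast
  note rspr_degrees =
    rspr_arcs_degrees[OF \<open>finite A\<close> assms(5,7,3) \<open>p \<noteq> x\<close> assms(9,10), folded M_def]
  have "s_indeg (set_mset M) v = s_indeg A v" for v
    using s_indeg_set_mset_if_count_le_1[OF simple] rspr_degrees(1)
      s_indeg_eq_m_indeg_mset_set[OF \<open>finite A\<close>] by simp
  moreover have "s_outdeg (set_mset M) v = s_outdeg A v" for v
    using s_outdeg_set_mset_if_count_le_1[OF simple] rspr_degrees(2)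
      s_outdeg_eq_m_outdeg_mset_set[OF \<open>finite A\<close>] by simp
  moreover have "set_mset M \<subseteq> V \<times> V"
    using graph unfolding hgt_graph_def by blast
  ultimately have "network X V (set_mset M)"
    using network_if_same_degrees[OF net _ hgt_consistent_acyclic[OF graph cons]] by blast
  with simple show ?thesis
    unfolding multigraph_network_def M_def by blast
qed

end
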